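(* Let $A$ be a unital $C^*$-algebra, let $P\in M_M(A)$ be a submagic matrix, let $K\ge0$ and $N=M+K$. If $P$ can be completed to a magic matrix $\widetilde P\in M_N(A)$ (i.e. one whose upper-left $M\times M$ block is $P$), then $\sum_{i,j=1}^M P_{ij}\ge (M-K)1$.
   Context: A submagic matrix over $A$ is a square matrix whose entries are orthogonal projections, pairwise orthogonal within each row and within each column; it is magic if moreover the entries in each row and each column sum to $1$. The inequality is in the order of self-adjoint elements of $A$. *)

theory Defs
  imports Complex_Main
begin

text \<open>Unital C*-algebras: a complex Banach algebra with unit, an involution and the C*-identity.
  The complex scalar multiplication is an extra operation compatible with the real one.\<close>

class cstar_algebra = real_normed_algebra_1 + banach +
  fixes cscale :: "complex \<Rightarrow> 'a \<Rightarrow> 'a"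
    and cstar :: "'a \<Rightarrow> 'a"
  assumes cscale_add_right: "cscale c (x + y) = cscale c x + cscale c y"
    and cscale_add_left: "cscale (c + d) x = cscale c x + cscale d x"
    and cscale_cscale: "cscale c (cscale d x) = cscale (c * d) x"
    and cscale_one: "cscale 1 x = x"
    and cscale_of_real: "cscale (complex_of_real r) x = scaleR r x"
    and cscale_mult_left: "cscale c (x * y) = cscale c x * y"
    and cscale_mult_right: "cscale c (x * y) = x * cscale c y"
    and norm_cscale: "norm (cscale c x) = cmod c * norm x"
    and cstar_cstar: "cstar (cstar x) = x"
    and cstar_add: "cstar (x + y) = cstar x + cstar y"
    and cstar_cscale: "cstar (cscale c x) = cscale (cnj c) (cstar x)"
    and cstar_mult: "cstar (x * y) = cstar y * cstar x"
    and cstar_identity: "norm (cstar x * x) = norm x * norm x"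

definition cstar_positive :: "'a::cstar_algebra \<Rightarrow> bool" where
  "cstar_positive x \<longleftrightarrow> (\<exists>c. x = cstar c * c)"

definition cstar_le :: "'a::cstar_algebra \<Rightarrow> 'a \<Rightarrow> bool" where
  "cstar_le a b \<longleftrightarrow> cstar a = a \<and> cstar b = b \<and> cstar_positive (b - a)"

definition is_projection :: "'a::cstar_algebra \<Rightarrow> bool" where
  "is_projection p \<longleftrightarrow> cstar p = p \<and> p * p = p"

text \<open>Square matrices of size n, represented as functions on indices < n.\<close>
definition submagic :: "nat \<Rightarrow> (nat \<Rightarrow> nat \<Rightarrow> 'a::cstar_algebra) \<Rightarrow> bool" where
  "submagic n P \<longleftrightarrow>
     (\<forall>i<n. \<forall>j<n. is_projection (P i j)) \<and>
     (\<forall>i<n. \<forall>j<n. \<forall>k<n. j \<noteq> k \<longrightarrow> P i j * P i k = 0) \<and>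
     (\<forall>j<n. \<forall>i<n. \<forall>k<n. i \<noteq> k \<longrightarrow> P i j * P k j = 0)"

definition magic :: "nat \<Rightarrow> (nat \<Rightarrow> nat \<Rightarrow> 'a::cstar_algebra) \<Rightarrow> bool" where
  "magic n P \<longleftrightarrow> submagic n P \<and>
     (\<forall>i<n. (\<Sum>j<n. P i j) = 1) \<and> (\<forall>j<n. (\<Sum>i<n. P i j) = 1)"

end

theory Submission imports Defs begin

(* Completing P to a magic matrix of size M + K, the row and column sums give
   sum_{i,j<M} P_ij = (M - K) 1 + T, where T is the sum of the lower-right K x K block.
   The rows of that block sum to projections p_i, so T is a sum of K projections, which is
   positive: (2/K) T = 1 - x with x the mean of the reflections 1 - 2 p_i, so norm x <= 1 and
   the binomial series of sqrt (1 - x) converges to a self-adjoint square root. *)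

text \<open>The coefficients of 1 - sqrt (1 - t), defined by the recursion expressing that this series
  f satisfies f^2 = 2 f - t.\<close>

function one_minus_sqrt_coeff :: "nat \<Rightarrow> real" where
  "one_minus_sqrt_coeff n =
     (if n = 0 then 0 else if n = 1 then 1/2
      else (\<Sum>k\<in>{1..<n}. one_minus_sqrt_coeff k * one_minus_sqrt_coeff (n - k)) / 2)"
  by auto
termination by (relation "measure id") auto

declare one_minus_sqrt_coeff.simps [simp del]

lemma one_minus_sqrt_coeff_0 [simp]: "one_minus_sqrt_coeff 0 = 0"
  by (simp add: one_minus_sqrt_coeff.simps)

lemma one_minus_sqrt_coeff_1 [simp]: "one_minus_sqrt_coeff (Suc 0) = 1/2"
  by (simp add: one_minus_sqrt_coeff.simps)

lemma one_minus_sqrt_coeff_nonneg: "one_minus_sqrt_coeff n \<ge> 0"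
proof (induction n rule: less_induct)
  case (less n)
  show ?case
    by (subst one_minus_sqrt_coeff.simps) (auto intro!: sum_nonneg mult_nonneg_nonneg less)
qed

lemma one_minus_sqrt_coeff_convolution:
  "n \<ge> 2 \<Longrightarrow>
    (\<Sum>k\<in>{Suc 0..<n}. one_minus_sqrt_coeff k * one_minus_sqrt_coeff (n - k)) =
    2 * one_minus_sqrt_coeff n"
  by (subst (2) one_minus_sqrt_coeff.simps) auto

lemma sum_one_minus_sqrt_coeff_le_1: "(\<Sum>n\<le>N. one_minus_sqrt_coeff n) \<le> 1"
proof (induction N)
  case 0
  then show ?case by simp
next
  case (Suc N)
  let ?a = one_minus_sqrt_coeff
  define A where "A = (\<Sum>n\<le>N. ?a n)"
  have "2 * (\<Sum>n\<le>Suc N. ?a n) = 1 + (\<Sum>n\<in>{2..Suc N}. 2 * ?a n)"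
  proof -
    have "{..Suc N} = {0, 1} \<union> {2..Suc N}" by auto
    then show ?thesis by (simp add: sum.union_disjoint sum_distrib_left)
  qed
  also have "(\<Sum>n\<in>{2..Suc N}. 2 * ?a n) = (\<Sum>n\<in>{2..Suc N}. \<Sum>k\<in>{1..<n}. ?a k * ?a (n - k))"
    by (rule sum.cong) (auto simp: one_minus_sqrt_coeff_convolution)
  also have "\<dots> = (\<Sum>(n, k)\<in>(SIGMA n:{2..Suc N}. {1..<n}). ?a k * ?a (n - k))"
    by (rule sum.Sigma) auto
  also have "\<dots> = (\<Sum>(k, m)\<in>(\<lambda>(n, k). (k, n - k)) ` (SIGMA n:{2..Suc N}. {1..<n}). ?a k * ?a m)"
    by (subst sum.reindex) (auto simp: inj_on_def intro!: sum.cong)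
  also have "\<dots> \<le> (\<Sum>(k, m)\<in>{..N} \<times> {..N}. ?a k * ?a m)"
    by (rule sum_mono2) (auto simp: one_minus_sqrt_coeff_nonneg)
  also have "\<dots> = A * A"
    by (simp add: A_def sum_product sum.cartesian_product)
  also have "A * A \<le> 1"
    using Suc.IH by (simp add: A_def mult_le_one sum_nonneg one_minus_sqrt_coeff_nonneg)
  finally show ?case by simp
qed

lemma summable_one_minus_sqrt_coeff: "summable one_minus_sqrt_coeff"
proof (rule summableI_nonneg_bounded[where x = 1])
  show "(\<Sum>i<n. one_minus_sqrt_coeff i) \<le> 1" for n
    using sum_one_minus_sqrt_coeff_le_1[of "n - 1"]
    by (cases n) (simp_all add: lessThan_Suc_atMost)
qed (rule one_minus_sqrt_coeff_nonneg)

definition sqrt_coeff :: "nat \<Rightarrow> real" where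
  "sqrt_coeff n = (if n = 0 then 1 else - one_minus_sqrt_coeff n)"

lemma summable_abs_sqrt_coeff: "summable (\<lambda>n. \<bar>sqrt_coeff n\<bar>)"
proof -
  have "summable (\<lambda>n. \<bar>sqrt_coeff (Suc n)\<bar>)"
    using summable_one_minus_sqrt_coeff[THEN summable_Suc_iff[THEN iffD2]]
    by (simp add: sqrt_coeff_def one_minus_sqrt_coeff_nonneg)
  then show ?thesis by (rule summable_Suc_iff[THEN iffD1])
qed

lemma sqrt_coeff_convolution:
  "(\<Sum>k\<le>n. sqrt_coeff k * sqrt_coeff (n - k)) = (if n = 0 then 1 else if n = 1 then -1 else 0)"
proof -
  consider "n = 0" | "n = 1" | "n \<ge> 2" by linarith
  then show ?thesis
  proof cases
    case 3
    have "{..n} = {0, n} \<union> {Suc 0..<n}" using 3 by auto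
    then have "(\<Sum>k\<le>n. sqrt_coeff k * sqrt_coeff (n - k)) =
        2 * sqrt_coeff n + (\<Sum>k\<in>{Suc 0..<n}. sqrt_coeff k * sqrt_coeff (n - k))"
      using 3 by (simp add: sum.union_disjoint sqrt_coeff_def)
    also have "(\<Sum>k\<in>{Suc 0..<n}. sqrt_coeff k * sqrt_coeff (n - k)) =
        (\<Sum>k\<in>{Suc 0..<n}. one_minus_sqrt_coeff k * one_minus_sqrt_coeff (n - k))"
      by (rule sum.cong) (auto simp: sqrt_coeff_def)
    finally show ?thesis
      using 3 by (simp add: one_minus_sqrt_coeff_convolution sqrt_coeff_def)
  qed (simp_all add: sqrt_coeff_def)
qed

lemma cstar_zero [simp]: "cstar (0::'a::cstar_algebra) = 0"
  by (metis add_cancel_right_right cstar_add)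

lemma cstar_one [simp]: "cstar (1::'a::cstar_algebra) = 1"
  by (metis cstar_cstar cstar_mult mult_1_left mult_1_right)

lemma cstar_scaleR [simp]: "cstar (r *\<^sub>R (x::'a::cstar_algebra)) = r *\<^sub>R cstar x"
  by (metis cstar_cscale cscale_of_real complex_cnj_complex_of_real)

lemma cstar_minus [simp]: "cstar (- (x::'a::cstar_algebra)) = - cstar x"
  by (metis add_eq_0_iff cstar_add cstar_zero neg_eq_iff_add_eq_0)

lemma cstar_diff [simp]: "cstar ((x::'a::cstar_algebra) - y) = cstar x - cstar y"
  by (metis cstar_add cstar_minus diff_conv_add_uminus)

lemma cstar_sum: "cstar (\<Sum>i\<in>A. f i :: 'a::cstar_algebra) = (\<Sum>i\<in>A. cstar (f i))"
  by (induction A rule: infinite_finite_induct) (auto simp: cstar_add)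

lemma cstar_of_nat [simp]: "cstar (of_nat n :: 'a::cstar_algebra) = of_nat n"
  by (induction n) (auto simp: cstar_add)

lemma cstar_of_int [simp]: "cstar (of_int n :: 'a::cstar_algebra) = of_int n"
  by (cases n rule: int_cases) simp_all

lemma cstar_power: "cstar ((x::'a::cstar_algebra) ^ n) = cstar x ^ n"
  by (induction n) (auto simp: cstar_mult power_commutes)

lemma norm_le_norm_cstar: "norm (x::'a::cstar_algebra) \<le> norm (cstar x)"
proof (cases "x = 0")
  case False
  have "norm x * norm x = norm (cstar x * x)" by (simp add: cstar_identity)
  also have "\<dots> \<le> norm (cstar x) * norm x" by (rule norm_mult_ineq)
  finally show ?thesis using False by simp
qed simp

lemma norm_cstar [simp]: "norm (cstar (x::'a::cstar_algebra)) = norm x"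
  using norm_le_norm_cstar[of x] norm_le_norm_cstar[of "cstar x"] by (simp add: cstar_cstar)

lemma bounded_linear_cstar: "bounded_linear (cstar :: 'a::cstar_algebra \<Rightarrow> 'a)"
  by (rule bounded_linear_intro[where K = 1]) (auto simp: cstar_add)

lemma selfadjoint_sqrt_one_minus:
  fixes x :: "'a::cstar_algebra"
  assumes selfadjoint: "cstar x = x" and norm_x: "norm x \<le> 1"
  shows "\<exists>s. cstar s = s \<and> s * s = 1 - x"
proof -
  define f where "f n = sqrt_coeff n *\<^sub>R x ^ n" for n
  have summable_norm_f: "summable (\<lambda>n. norm (f n))"
  proof (rule summable_comparison_test[OF _ summable_abs_sqrt_coeff], intro exI allI impI)
    fix n
    have "norm (x ^ n) \<le> 1"
      using norm_power_ineq[of x n] power_le_one[OF norm_ge_zero norm_x, of n] by linarith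
    then show "norm (norm (f n)) \<le> \<bar>sqrt_coeff n\<bar>"
      unfolding f_def by (simp add: mult_left_le)
  qed
  define s where "s = suminf f"
  have "cstar s = (\<Sum>n. cstar (f n))"
    unfolding s_def
    by (rule bounded_linear.suminf[OF bounded_linear_cstar summable_norm_cancel[OF summable_norm_f]])
  also have "\<dots> = s"
    unfolding s_def f_def by (simp add: cstar_power selfadjoint)
  finally have "cstar s = s" .
  moreover have "s * s = 1 - x"
  proof -
    have "s * s = (\<Sum>n. \<Sum>k\<le>n. f k * f (n - k))"
      unfolding s_def by (rule Cauchy_product[OF summable_norm_f summable_norm_f])
    also have "\<dots> = (\<Sum>n. (\<Sum>k\<le>n. sqrt_coeff k * sqrt_coeff (n - k)) *\<^sub>R x ^ n)"
      by (simp add: f_def scaleR_sum_left power_add[symmetric] mult.commute)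
    also have "\<dots> = (\<Sum>n\<in>{0, 1}. (if n = 0 then 1 else if n = 1 then -1 else 0) *\<^sub>R x ^ n)"
      unfolding sqrt_coeff_convolution by (rule suminf_finite) auto
    finally show ?thesis by simp
  qed
  ultimately show ?thesis by blast
qed

lemma cstar_positive_scaleR:
  fixes y :: "'a::cstar_algebra"
  assumes "r \<ge> 0" and "cstar_positive y"
  shows "cstar_positive (r *\<^sub>R y)"
proof -
  obtain c where "y = cstar c * c" using assms(2) by (auto simp: cstar_positive_def)
  then have "r *\<^sub>R y = cstar (sqrt r *\<^sub>R c) * (sqrt r *\<^sub>R c)"
    using assms(1) by simp
  then show ?thesis unfolding cstar_positive_def by blast
qed

lemma norm_reflection_le_1:
  fixes p :: "'a::cstar_algebra"
  assumes "is_projection p"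
  shows "norm (1 - 2 *\<^sub>R p) \<le> 1"
proof -
  define u where "u = 1 - 2 *\<^sub>R p"
  have "cstar u = u"
    using assms by (simp add: u_def is_projection_def)
  moreover have "u * u = 1"
    using assms by (simp add: u_def is_projection_def algebra_simps scaleR_2)
  ultimately have "cstar u * u = 1" by simp
  then have "norm u * norm u = 1" by (metis cstar_identity norm_one)
  then show ?thesis
    using abs_square_le_1[of "norm u"] by (simp add: u_def power2_eq_square)
qed

lemma cstar_positive_sum_projections:
  fixes p :: "'i \<Rightarrow> 'a::cstar_algebra"
  assumes "finite I" and proj: "\<And>i. i \<in> I \<Longrightarrow> is_projection (p i)"
  shows "cstar_positive (\<Sum>i\<in>I. p i)"
proof (cases "I = {}")
  case True
  then show ?thesis unfolding cstar_positive_def by (intro exI[of _ 0]) simp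
next
  case False
  define k where "k = real (card I)"
  have k_pos: "k > 0" using assms(1) False by (simp add: k_def card_gt_0_iff)
  define x where "x = (1 / k) *\<^sub>R (\<Sum>i\<in>I. 1 - 2 *\<^sub>R p i)"
  have "cstar x = x"
    using proj by (simp add: x_def cstar_sum is_projection_def)
  moreover have "norm x \<le> 1"
  proof -
    have "norm (\<Sum>i\<in>I. 1 - 2 *\<^sub>R p i) \<le> (\<Sum>i\<in>I. norm (1 - 2 *\<^sub>R p i))"
      by (rule norm_sum)
    also have "\<dots> \<le> (\<Sum>i\<in>I. 1)"
      by (rule sum_mono) (simp add: norm_reflection_le_1 proj)
    finally show ?thesis using k_pos by (simp add: x_def k_def field_simps)
  qed
  ultimately obtain s where "cstar s = s" "s * s = 1 - x"
    using selfadjoint_sqrt_one_minus by blast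
  then have "cstar_positive (1 - x)"
    unfolding cstar_positive_def by metis
  moreover have "(\<Sum>i\<in>I. p i) = (k / 2) *\<^sub>R (1 - x)"
  proof -
    have "(\<Sum>i\<in>I. 1 - 2 *\<^sub>R p i) = k *\<^sub>R 1 - 2 *\<^sub>R (\<Sum>i\<in>I. p i)"
      by (simp add: sum_subtractf scaleR_sum_right k_def of_real_def[symmetric])
    then have "x = 1 - (2 / k) *\<^sub>R (\<Sum>i\<in>I. p i)"
      using k_pos by (simp add: x_def scaleR_diff_right)
    then show ?thesis using k_pos by simp
  qed
  moreover have "k / 2 \<ge> 0" using k_pos by simp
  ultimately show ?thesis
    by (metis cstar_positive_scaleR)
qed

lemma is_projection_sum_orthogonal:
  fixes p :: "'i \<Rightarrow> 'a::cstar_algebra"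
  assumes "finite I" and proj: "\<And>i. i \<in> I \<Longrightarrow> is_projection (p i)"
    and orth: "\<And>i j. i \<in> I \<Longrightarrow> j \<in> I \<Longrightarrow> i \<noteq> j \<Longrightarrow> p i * p j = 0"
  shows "is_projection (\<Sum>i\<in>I. p i)"
proof -
  have "(\<Sum>i\<in>I. p i) * (\<Sum>j\<in>I. p j) = (\<Sum>i\<in>I. \<Sum>j\<in>I. p i * p j)"
    by (rule sum_product)
  also have "\<dots> = (\<Sum>i\<in>I. p i * p i)"
  proof (rule sum.cong [OF refl])
    fix i assume "i \<in> I"
    then have "(\<Sum>j\<in>I. p i * p j) = p i * p i + (\<Sum>j\<in>I - {i}. p i * p j)"
      using assms(1) by (simp add: sum.remove)
    also have "(\<Sum>j\<in>I - {i}. p i * p j) = 0"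
    proof (rule sum.neutral, rule ballI)
      fix j assume "j \<in> I - {i}"
      with \<open>i \<in> I\<close> show "p i * p j = 0" by (auto intro: orth)
    qed
    finally show "(\<Sum>j\<in>I. p i * p j) = p i * p i" by simp
  qed
  also have "\<dots> = (\<Sum>i\<in>I. p i)"
    using proj by (simp add: is_projection_def)
  finally show ?thesis
    using proj by (simp add: is_projection_def cstar_sum)
qed

lemma magic_upper_left_block_sum:
  fixes Q :: "nat \<Rightarrow> nat \<Rightarrow> 'a::cstar_algebra"
  assumes "magic (M + K) Q"
  shows "(\<Sum>i<M. \<Sum>j<M. Q i j) =
    of_nat M - of_nat K + (\<Sum>i\<in>{M..<M + K}. \<Sum>j\<in>{M..<M + K}. Q i j)"
proof -
  let ?J = "{M..<M + K}"
  have split: "(\<Sum>j<M + K. f j) = (\<Sum>j<M. f j) + (\<Sum>j\<in>?J. f j)" for f :: "nat \<Rightarrow> 'a"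
    by (subst sum.union_disjoint[symmetric]) (auto simp: ivl_disj_un_one)
  have row: "(\<Sum>j<M. Q i j) = 1 - (\<Sum>j\<in>?J. Q i j)" if "i < M + K" for i
  proof -
    have "(\<Sum>j<M + K. Q i j) = 1" using assms that by (simp add: magic_def)
    then show ?thesis by (simp add: split eq_diff_eq)
  qed
  have col: "(\<Sum>i<M. Q i j) = 1 - (\<Sum>i\<in>?J. Q i j)" if "j < M + K" for j
  proof -
    have "(\<Sum>i<M + K. Q i j) = 1" using assms that by (simp add: magic_def)
    then show ?thesis by (simp add: split eq_diff_eq)
  qed
  have "(\<Sum>i<M. \<Sum>j<M. Q i j) = (\<Sum>i<M. 1 - (\<Sum>j\<in>?J. Q i j))"
    by (rule sum.cong) (auto simp: row)
  also have "\<dots> = of_nat M - (\<Sum>i<M. \<Sum>j\<in>?J. Q i j)"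
    by (simp add: sum_subtractf)
  also have "(\<Sum>i<M. \<Sum>j\<in>?J. Q i j) = (\<Sum>j\<in>?J. \<Sum>i<M. Q i j)"
    by (rule sum.swap)
  also have "\<dots> = (\<Sum>j\<in>?J. 1 - (\<Sum>i\<in>?J. Q i j))"
    by (rule sum.cong) (auto simp: col)
  also have "\<dots> = of_nat K - (\<Sum>j\<in>?J. \<Sum>i\<in>?J. Q i j)"
    by (simp add: sum_subtractf)
  also have "(\<Sum>j\<in>?J. \<Sum>i\<in>?J. Q i j) = (\<Sum>i\<in>?J. \<Sum>j\<in>?J. Q i j)"
    by (rule sum.swap)
  finally show ?thesis by simp
qed

theorem proposition3p3:
  fixes P :: "nat \<Rightarrow> nat \<Rightarrow> 'a::cstar_algebra" and M K :: nat
  assumes "submagic M P"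
    and "\<exists>Q. magic (M + K) Q \<and> (\<forall>i<M. \<forall>j<M. Q i j = P i j)"
  shows "cstar_le (of_int (int M - int K)) (\<Sum>i<M. \<Sum>j<M. P i j)"
proof -
  obtain Q where magic: "magic (M + K) Q" and block: "\<forall>i<M. \<forall>j<M. Q i j = P i j"
    using assms(2) by blast
  let ?J = "{M..<M + K}" and ?S = "\<Sum>i<M. \<Sum>j<M. P i j"
  have "is_projection (\<Sum>j\<in>?J. Q i j)" if "i \<in> ?J" for i
    using magic that by (intro is_projection_sum_orthogonal) (auto simp: magic_def submagic_def)
  then have "cstar_positive (\<Sum>i\<in>?J. \<Sum>j\<in>?J. Q i j)"
    by (rule cstar_positive_sum_projections[OF finite_atLeastLessThan])
  moreover have "?S - of_int (int M - int K) = (\<Sum>i\<in>?J. \<Sum>j\<in>?J. Q i j)"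
    using magic_upper_left_block_sum[OF magic] block by (simp add: of_int_diff)
  moreover have "cstar ?S = ?S"
    using assms(1) by (simp add: cstar_sum submagic_def is_projection_def)
  ultimately show ?thesis
    unfolding cstar_le_def by (simp only: cstar_of_int)
qed

end
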